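(* Let $\mathcal H$ be a graded connected Hopf algebra over a field $\Bbbk$, let $\zeta\colon\mathcal H\to\Bbbk$ be a character of $\mathcal H$ and $\eta\colon\mathcal H^*\to\Bbbk$ a character of its graded dual (no compatibility between $\zeta$ and $\eta$ is assumed). If $\zeta$ is even (respectively, odd), then each component $\zeta_n=\zeta|_{\mathcal H_n}$ belongs to $S_+(\mathcal H^*,\eta)$ (respectively, $S_-(\mathcal H^*,\eta)$).
   Context: $\mathcal H=\bigoplus_{n\ge0}\mathcal H_n$ is graded connected with finite-dimensional components, and $\mathcal H^*=\bigoplus_n(\mathcal H_n)^*$ is its graded dual Hopf algebra (also graded connected with finite-dimensional components), so $\zeta_n\in\mathcal H^*$ is homogeneous of degree $n$. For any such Hopf algebra $\mathcal K$ and character $\theta$: characters multiply by convolution, $\theta^{-1}=\theta\circ S$, $\bar\theta(k)=(-1)^n\theta(k)$ for $k\in\mathcal K_n$; $\theta$ is even if $\bar\theta=\theta$, odd if $\bar\theta=\theta^{-1}$. $S_+(\mathcal K,\theta)$ (resp. $S_-(\mathcal K,\theta)$) is the largest graded subcoalgebra of $\mathcal K$ on which $\bar\theta$ agrees with $\theta$ (resp. with $\theta^{-1}$). *)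

theory Defs
  imports Main
begin

text \<open>
  A graded connected Hopf algebra with finite-dimensional homogeneous components over a
  field 'k is encoded by a homogeneous basis indexed by the type 'b together with its
  structure constants:
  deg b is the degree of the basis vector b; the unit is the basis vector hunit;
  b1 * b2 = sum over c of hmult b1 b2 c times c;
  Delta b = sum over (c1,c2) of hcomult b c1 c2 times (c1 tensor c2);
  S b = sum over c of hantip b c times c.
  Elements of the algebra are finitely supported coefficient functions 'b => 'k.
\<close>

record ('b, 'k) hopf_data =
  hdeg :: "'b \<Rightarrow> nat"
  hunit :: 'b
  hmult :: "'b \<Rightarrow> 'b \<Rightarrow> 'b \<Rightarrow> 'k"
  hcomult :: "'b \<Rightarrow> 'b \<Rightarrow> 'b \<Rightarrow> 'k"
  hantip :: "'b \<Rightarrow> 'b \<Rightarrow> 'k"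

definition Deg :: "('b, 'k) hopf_data \<Rightarrow> nat \<Rightarrow> 'b set" where
  "Deg K n = {b. hdeg K b = n}"

definition Split :: "('b, 'k) hopf_data \<Rightarrow> nat \<Rightarrow> ('b \<times> 'b) set" where
  "Split K n = {(u, v). hdeg K u + hdeg K v = n}"

definition hcounit :: "('b, 'k::field) hopf_data \<Rightarrow> 'b \<Rightarrow> 'k" where
  "hcounit K b = (if b = hunit K then 1 else 0)"

definition is_hopf :: "('b, 'k::field) hopf_data \<Rightarrow> bool" where
  "is_hopf K \<longleftrightarrow>
     \<comment> \<open>finite-dimensional components, connected\<close>
     (\<forall>n. finite (Deg K n)) \<and> Deg K 0 = {hunit K} \<and>
     \<comment> \<open>grading of the structure maps\<close>
     (\<forall>a b c. hmult K a b c \<noteq> 0 \<longrightarrow> hdeg K c = hdeg K a + hdeg K b) \<and>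
     (\<forall>a b c. hcomult K a b c \<noteq> 0 \<longrightarrow> hdeg K b + hdeg K c = hdeg K a) \<and>
     (\<forall>a b. hantip K a b \<noteq> 0 \<longrightarrow> hdeg K b = hdeg K a) \<and>
     \<comment> \<open>unit and associativity\<close>
     (\<forall>a c. hmult K (hunit K) a c = (if a = c then 1 else 0)) \<and>
     (\<forall>a c. hmult K a (hunit K) c = (if a = c then 1 else 0)) \<and>
     (\<forall>a b c d. (\<Sum>x\<in>Deg K (hdeg K a + hdeg K b). hmult K a b x * hmult K x c d) =
                (\<Sum>y\<in>Deg K (hdeg K b + hdeg K c). hmult K b c y * hmult K a y d)) \<and>
     \<comment> \<open>counit and coassociativity\<close>
     (\<forall>a c. (\<Sum>u\<in>Deg K 0. hcounit K u * hcomult K a u c) = (if a = c then 1 else 0)) \<and>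
     (\<forall>a c. (\<Sum>u\<in>Deg K 0. hcounit K u * hcomult K a c u) = (if a = c then 1 else 0)) \<and>
     (\<forall>a c1 c2 c3. (\<Sum>x\<in>Deg K (hdeg K c1 + hdeg K c2). hcomult K a x c3 * hcomult K x c1 c2) =
                   (\<Sum>y\<in>Deg K (hdeg K c2 + hdeg K c3). hcomult K a c1 y * hcomult K y c2 c3)) \<and>
     \<comment> \<open>bialgebra compatibility: Delta 1 = 1 tensor 1, Delta (a b) = Delta a Delta b\<close>
     (\<forall>c1 c2. hcomult K (hunit K) c1 c2 = (if c1 = hunit K \<and> c2 = hunit K then 1 else 0)) \<and>
     (\<forall>a b c1 c2. (\<Sum>x\<in>Deg K (hdeg K a + hdeg K b). hmult K a b x * hcomult K x c1 c2) =
        (\<Sum>(u, v)\<in>Split K (hdeg K a) \<times> Split K (hdeg K b).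
            hcomult K a (fst u) (snd u) * hcomult K b (fst v) (snd v) *
            hmult K (fst u) (fst v) c1 * hmult K (snd u) (snd v) c2)) \<and>
     \<comment> \<open>antipode: m (S tensor id) Delta = m (id tensor S) Delta = unit o counit\<close>
     (\<forall>a c. (\<Sum>(u1, u2)\<in>Split K (hdeg K a). hcomult K a u1 u2 *
              (\<Sum>w\<in>Deg K (hdeg K u1). hantip K u1 w * hmult K w u2 c)) =
            hcounit K a * (if c = hunit K then 1 else 0)) \<and>
     (\<forall>a c. (\<Sum>(u1, u2)\<in>Split K (hdeg K a). hcomult K a u1 u2 *
              (\<Sum>w\<in>Deg K (hdeg K u2). hantip K u2 w * hmult K u1 w c)) =
            hcounit K a * (if c = hunit K then 1 else 0))"

text \<open>Graded dual, in the dual basis (delta_b)(c) = [b = c]: product is dual to the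
  coproduct, coproduct dual to the product, antipode is the transpose.\<close>
definition hdual :: "('b, 'k) hopf_data \<Rightarrow> ('b, 'k) hopf_data" where
  "hdual K = \<lparr> hdeg = hdeg K, hunit = hunit K,
              hmult = (\<lambda>c1 c2 b. hcomult K b c1 c2),
              hcomult = (\<lambda>b c1 c2. hmult K c1 c2 b),
              hantip = (\<lambda>b c. hantip K c b) \<rparr>"

definition supp :: "('b \<Rightarrow> 'k::zero) \<Rightarrow> 'b set" where
  "supp x = {b. x b \<noteq> 0}"

definition fin_elem :: "('b \<Rightarrow> 'k::zero) \<Rightarrow> bool" where
  "fin_elem x \<longleftrightarrow> finite (supp x)"

definition lin :: "('b \<Rightarrow> 'k::field) \<Rightarrow> ('b \<Rightarrow> 'k) \<Rightarrow> 'k" where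
  "lin \<theta> x = (\<Sum>b\<in>supp x. x b * \<theta> b)"

definition is_character :: "('b, 'k::field) hopf_data \<Rightarrow> ('b \<Rightarrow> 'k) \<Rightarrow> bool" where
  "is_character K \<theta> \<longleftrightarrow> \<theta> (hunit K) = 1 \<and>
     (\<forall>a b. \<theta> a * \<theta> b = (\<Sum>c\<in>Deg K (hdeg K a + hdeg K b). hmult K a b c * \<theta> c))"

definition bar :: "('b, 'k::field) hopf_data \<Rightarrow> ('b \<Rightarrow> 'k) \<Rightarrow> 'b \<Rightarrow> 'k" where
  "bar K \<theta> b = (-1) ^ hdeg K b * \<theta> b"

text \<open>theta^{-1} = theta o S.\<close>
definition char_inv :: "('b, 'k::field) hopf_data \<Rightarrow> ('b \<Rightarrow> 'k) \<Rightarrow> 'b \<Rightarrow> 'k" where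
  "char_inv K \<theta> b = (\<Sum>c\<in>Deg K (hdeg K b). hantip K b c * \<theta> c)"

definition even_char :: "('b, 'k::field) hopf_data \<Rightarrow> ('b \<Rightarrow> 'k) \<Rightarrow> bool" where
  "even_char K \<theta> \<longleftrightarrow> bar K \<theta> = \<theta>"

definition odd_char :: "('b, 'k::field) hopf_data \<Rightarrow> ('b \<Rightarrow> 'k) \<Rightarrow> bool" where
  "odd_char K \<theta> \<longleftrightarrow> bar K \<theta> = char_inv K \<theta>"

definition cop :: "('b, 'k::field) hopf_data \<Rightarrow> ('b \<Rightarrow> 'k) \<Rightarrow> 'b \<times> 'b \<Rightarrow> 'k" where
  "cop K x = (\<lambda>(u, v). \<Sum>b\<in>supp x. x b * hcomult K b u v)"

text \<open>C tensor C: finite sums of elementary tensors x tensor y with x, y in C.\<close>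
definition tensor_sub :: "('b \<Rightarrow> 'k::field) set \<Rightarrow> ('b \<times> 'b \<Rightarrow> 'k) set" where
  "tensor_sub C = {t. \<exists>ps. set ps \<subseteq> C \<times> C \<and>
                        t = (\<lambda>(u, v). \<Sum>(x, y)\<leftarrow>ps. x u * y v)}"

definition proj :: "('b, 'k::field) hopf_data \<Rightarrow> nat \<Rightarrow> ('b \<Rightarrow> 'k) \<Rightarrow> 'b \<Rightarrow> 'k" where
  "proj K n x = (\<lambda>b. if hdeg K b = n then x b else 0)"

definition graded_subcoalgebra :: "('b, 'k::field) hopf_data \<Rightarrow> ('b \<Rightarrow> 'k) set \<Rightarrow> bool" where
  "graded_subcoalgebra K C \<longleftrightarrow>
     (\<forall>x\<in>C. fin_elem x) \<and> (\<lambda>_. 0) \<in> C \<and>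
     (\<forall>x\<in>C. \<forall>y\<in>C. (\<lambda>b. x b + y b) \<in> C) \<and>
     (\<forall>x\<in>C. \<forall>a. (\<lambda>b. a * x b) \<in> C) \<and>
     (\<forall>x\<in>C. \<forall>n. proj K n x \<in> C) \<and>
     (\<forall>x\<in>C. cop K x \<in> tensor_sub C)"

text \<open>S_+(K,theta), S_-(K,theta): the largest graded subcoalgebra on which bar theta agrees
  with theta (resp. theta^{-1}). As a set it equals the union of all such subcoalgebras
  (the largest one is among them and contains all of them).\<close>
definition S_plus :: "('b, 'k::field) hopf_data \<Rightarrow> ('b \<Rightarrow> 'k) \<Rightarrow> ('b \<Rightarrow> 'k) set" where
  "S_plus K \<theta> = \<Union>{C. graded_subcoalgebra K C \<and> (\<forall>x\<in>C. lin (bar K \<theta>) x = lin \<theta> x)}"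

definition S_minus :: "('b, 'k::field) hopf_data \<Rightarrow> ('b \<Rightarrow> 'k) \<Rightarrow> ('b \<Rightarrow> 'k) set" where
  "S_minus K \<theta> = \<Union>{C. graded_subcoalgebra K C \<and>
                        (\<forall>x\<in>C. lin (bar K \<theta>) x = lin (char_inv K \<theta>) x)}"

text \<open>zeta_n = zeta restricted to H_n, as an element of the graded dual (dual basis coords).\<close>
definition hcomp :: "('b, 'k::field) hopf_data \<Rightarrow> ('b \<Rightarrow> 'k) \<Rightarrow> nat \<Rightarrow> 'b \<Rightarrow> 'k" where
  "hcomp K \<zeta> n = (\<lambda>b. if hdeg K b = n then \<zeta> b else 0)"

end

theory Submission
  imports Defs
begin

(*
  Since \<zeta> is a character, the coproduct of the graded dual sends \<zeta>_n to the sum of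
  \<zeta>_i \<otimes> \<zeta>_j over i + j = n, so the span of the components \<zeta>_n is a graded subcoalgebra
  of the dual. It needs no property of \<eta> beyond linearity: in the pairing with \<zeta>_n the sign
  twist moves from \<eta> to \<zeta>, and the transposed antipode acting on \<eta> becomes the antipode
  acting on \<zeta>, so bar \<eta> agrees with \<eta> (resp. \<eta>^-1) on \<zeta>_n because bar \<zeta> = \<zeta>
  (resp. bar \<zeta> = \<zeta>^-1).
*)

lemma is_hopf_finite_Deg: "is_hopf H \<Longrightarrow> finite (Deg H n)"
  unfolding is_hopf_def by (elim conjE) blast

lemma is_hopf_hmult_deg:
  "is_hopf H \<Longrightarrow> hmult H a b c \<noteq> 0 \<Longrightarrow> hdeg H c = hdeg H a + hdeg H b"
  unfolding is_hopf_def by (elim conjE) blast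

lemma hdual_simps [simp]:
  "hdeg (hdual H) = hdeg H" "Deg (hdual H) = Deg H"
  "hcomult (hdual H) b c1 c2 = hmult H c1 c2 b"
  "hantip (hdual H) b c = hantip H c b"
  by (simp_all add: hdual_def Deg_def fun_eq_iff)

lemma sum_supp_eq_sum_superset:
  fixes x :: "'b \<Rightarrow> 'k::semiring_0"
  assumes "finite D" "supp x \<subseteq> D"
  shows "(\<Sum>b\<in>supp x. x b * f b) = (\<Sum>b\<in>D. x b * f b)"
  by (rule sum.mono_neutral_left[OF assms]) (simp add: supp_def)

lemma supp_hcomp: "supp (hcomp H \<zeta> n) \<subseteq> Deg H n"
  by (auto simp: supp_def hcomp_def Deg_def)

lemma lin_hcomp:
  assumes "is_hopf H"
  shows "lin \<theta> (hcomp H \<zeta> n) = (\<Sum>b\<in>Deg H n. \<zeta> b * \<theta> b)"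
  unfolding lin_def
  by (simp add: sum_supp_eq_sum_superset[OF is_hopf_finite_Deg[OF assms] supp_hcomp])
     (simp add: hcomp_def Deg_def)

lemma tensor_subI:
  assumes "finite P" "\<And>i. i \<in> P \<Longrightarrow> f i \<in> C \<and> g i \<in> C"
  shows "(\<lambda>(u, v). \<Sum>i\<in>P. f i u * g i v) \<in> tensor_sub C"
proof -
  obtain js where "set js = P" "distinct js"
    using finite_distinct_list[OF assms(1)] by blast
  then have "(\<lambda>(u, v). \<Sum>i\<in>P. f i u * g i v) =
             (\<lambda>(u, v). \<Sum>(x, y)\<leftarrow>map (\<lambda>i. (f i, g i)) js. x u * y v)"
    by (auto simp: comp_def sum_list_distinct_conv_sum_set)
  moreover have "set (map (\<lambda>i. (f i, g i)) js) \<subseteq> C \<times> C"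
    using assms(2) \<open>set js = P\<close> by auto
  ultimately show ?thesis
    unfolding tensor_sub_def by blast
qed

(* The function \<lambda>b. a (hdeg H b) * \<zeta> b is the element \<Sum> a_n \<zeta>_n of the graded dual. *)

definition component_span :: "('b, 'k::field) hopf_data \<Rightarrow> ('b \<Rightarrow> 'k) \<Rightarrow> ('b \<Rightarrow> 'k) set" where
  "component_span H \<zeta> = {(\<lambda>b. a (hdeg H b) * \<zeta> b) | a. finite {n. a n \<noteq> 0}}"

lemma component_spanI:
  "finite {n. a n \<noteq> 0} \<Longrightarrow> (\<lambda>b. a (hdeg H b) * \<zeta> b) \<in> component_span H \<zeta>"
  unfolding component_span_def by blast

lemma component_spanE:
  assumes "x \<in> component_span H \<zeta>"
  obtains a where "finite {n. a n \<noteq> 0}" "x = (\<lambda>b. a (hdeg H b) * \<zeta> b)"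
  using assms unfolding component_span_def by blast

lemma scaled_hcomp_mem_component_span:
  "(\<lambda>b. c * hcomp H \<zeta> n b) \<in> component_span H \<zeta>"
proof -
  have "finite {m. (if m = n then c else 0) \<noteq> 0}"
    by (rule finite_subset[of _ "{n}"]) auto
  then have "(\<lambda>b. (if hdeg H b = n then c else 0) * \<zeta> b) \<in> component_span H \<zeta>"
    by (rule component_spanI)
  moreover have "(\<lambda>b. (if hdeg H b = n then c else 0) * \<zeta> b) = (\<lambda>b. c * hcomp H \<zeta> n b)"
    by (auto simp: hcomp_def)
  ultimately show ?thesis
    by simp
qed

lemma hcomp_mem_component_span: "hcomp H \<zeta> n \<in> component_span H \<zeta>"
  using scaled_hcomp_mem_component_span[of 1] by simp

lemma supp_component_span:
  fixes \<zeta> :: "'b \<Rightarrow> 'k::semiring_0"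
  shows "supp (\<lambda>b. a (hdeg H b) * \<zeta> b) \<subseteq> (\<Union>n\<in>{n. a n \<noteq> 0}. Deg H n)"
  by (auto simp: supp_def Deg_def dest!: mult_not_zero)

lemma fin_elem_component_span:
  assumes "is_hopf H" "x \<in> component_span H \<zeta>"
  shows "fin_elem x"
proof -
  obtain a where a: "finite {n. a n \<noteq> 0}" "x = (\<lambda>b. a (hdeg H b) * \<zeta> b)"
    using assms(2) by (rule component_spanE)
  then show ?thesis
    using supp_component_span is_hopf_finite_Deg[OF assms(1)]
    unfolding fin_elem_def by (metis finite_UN_I finite_subset)
qed

lemma lin_component_span:
  assumes "is_hopf H" "finite {n. a n \<noteq> 0}"
  shows "lin \<theta> (\<lambda>b. a (hdeg H b) * \<zeta> b) = (\<Sum>n | a n \<noteq> 0. a n * lin \<theta> (hcomp H \<zeta> n))"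
proof -
  have fin: "\<And>n. finite (Deg H n)"
    using is_hopf_finite_Deg[OF assms(1)] .
  have "lin \<theta> (\<lambda>b. a (hdeg H b) * \<zeta> b) =
        (\<Sum>b\<in>(\<Union>n\<in>{n. a n \<noteq> 0}. Deg H n). a (hdeg H b) * \<zeta> b * \<theta> b)"
    unfolding lin_def
    by (rule sum_supp_eq_sum_superset[OF _ supp_component_span]) (use assms(2) fin in blast)
  also have "\<dots> = (\<Sum>n | a n \<noteq> 0. \<Sum>b\<in>Deg H n. a (hdeg H b) * \<zeta> b * \<theta> b)"
    by (rule sum.UNION_disjoint) (use assms(2) fin in \<open>auto simp: Deg_def\<close>)
  also have "\<dots> = (\<Sum>n | a n \<noteq> 0. a n * lin \<theta> (hcomp H \<zeta> n))"
    by (simp add: lin_hcomp[OF assms(1)] sum_distrib_left mult.assoc Deg_def)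
  finally show ?thesis .
qed

lemma lin_component_span_eq:
  assumes "is_hopf H" "\<And>n. lin \<theta> (hcomp H \<zeta> n) = lin \<theta>' (hcomp H \<zeta> n)"
    and "x \<in> component_span H \<zeta>"
  shows "lin \<theta> x = lin \<theta>' x"
proof -
  obtain a where a: "finite {n. a n \<noteq> 0}" "x = (\<lambda>b. a (hdeg H b) * \<zeta> b)"
    using assms(3) by (rule component_spanE)
  show ?thesis
    using lin_component_span[OF assms(1) a(1)] assms(2) by (simp add: a(2))
qed

lemma cop_hdual_component_span:
  assumes H: "is_hopf H" and \<zeta>: "is_character H \<zeta>" and a: "finite {n. a n \<noteq> 0}"
  shows "cop (hdual H) (\<lambda>b. a (hdeg H b) * \<zeta> b) (u, v) = a (hdeg H u + hdeg H v) * \<zeta> u * \<zeta> v"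
proof -
  define x where "x = (\<lambda>b. a (hdeg H b) * \<zeta> b)"
  define n where "n = hdeg H u + hdeg H v"
  have "fin_elem x"
    unfolding x_def by (rule fin_elem_component_span[OF H component_spanI[OF a]])
  then have fin: "finite (supp x \<union> Deg H n)"
    using is_hopf_finite_Deg[OF H] by (simp add: fin_elem_def)
  have "cop (hdual H) x (u, v) = (\<Sum>b\<in>supp x \<union> Deg H n. x b * hmult H u v b)"
    unfolding cop_def by (simp add: sum_supp_eq_sum_superset[OF fin])
  also have "\<dots> = (\<Sum>b\<in>Deg H n. x b * hmult H u v b)"
    by (rule sum.mono_neutral_right)
       (use fin is_hopf_hmult_deg[OF H] in \<open>auto simp: Deg_def n_def\<close>)
  also have "\<dots> = a n * (\<Sum>b\<in>Deg H n. hmult H u v b * \<zeta> b)"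
    by (auto simp: sum_distrib_left x_def Deg_def mult_ac intro!: sum.cong)
  also have "\<dots> = a n * (\<zeta> u * \<zeta> v)"
    using \<zeta> by (simp add: is_character_def n_def)
  finally show ?thesis
    by (simp add: x_def n_def mult.assoc)
qed

lemma cop_component_span_mem_tensor_sub:
  assumes H: "is_hopf H" and \<zeta>: "is_character H \<zeta>" and x: "x \<in> component_span H \<zeta>"
  shows "cop (hdual H) x \<in> tensor_sub (component_span H \<zeta>)"
proof -
  obtain a where a: "finite {n. a n \<noteq> 0}" and x_eq: "x = (\<lambda>b. a (hdeg H b) * \<zeta> b)"
    using x by (rule component_spanE)
  obtain M where M: "\<And>n. M \<le> n \<Longrightarrow> a n = 0"
    using a finite_nat_set_iff_bounded by (metis (mono_tags) mem_Collect_eq not_less)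
  define f where "f = (\<lambda>p b. a (fst p + snd p) * hcomp H \<zeta> (fst p) b)"
  define g where "g = (\<lambda>p::nat \<times> nat. hcomp H \<zeta> (snd p))"
  have "cop (hdual H) x = (\<lambda>(u, v). \<Sum>p\<in>{..<M} \<times> {..<M}. f p u * g p v)"
  proof (intro ext, clarify)
    fix u v
    have "(\<Sum>p\<in>{..<M} \<times> {..<M}. f p u * g p v) =
          (\<Sum>(i, j)\<in>{..<M} \<times> {..<M}. a (i + j) * hcomp H \<zeta> i u * hcomp H \<zeta> j v)"
      by (simp add: f_def g_def split_def)
    also have "\<dots> =
          (if hdeg H u < M \<and> hdeg H v < M then a (hdeg H u + hdeg H v) * \<zeta> u * \<zeta> v else 0)"
      unfolding sum.cartesian_product[symmetric]
      by (simp add: hcomp_def if_distrib if_distribR sum.If_cases)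
    also have "\<dots> = a (hdeg H u + hdeg H v) * \<zeta> u * \<zeta> v"
      using M[of "hdeg H u + hdeg H v"] by auto
    finally show "cop (hdual H) x (u, v) = (\<Sum>p\<in>{..<M} \<times> {..<M}. f p u * g p v)"
      using cop_hdual_component_span[OF H \<zeta> a] by (simp add: x_eq)
  qed
  moreover have "f p \<in> component_span H \<zeta> \<and> g p \<in> component_span H \<zeta>" for p
    by (simp add: f_def g_def scaled_hcomp_mem_component_span hcomp_mem_component_span)
  ultimately show ?thesis
    using tensor_subI[of "{..<M} \<times> {..<M}" f "component_span H \<zeta>" g] by simp
qed

lemma component_span_graded_subcoalgebra:
  assumes H: "is_hopf H" and \<zeta>: "is_character H \<zeta>"
  shows "graded_subcoalgebra (hdual H) (component_span H \<zeta>)"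
  unfolding graded_subcoalgebra_def
proof (intro conjI ballI allI)
  fix x assume "x \<in> component_span H \<zeta>"
  then show "fin_elem x" "cop (hdual H) x \<in> tensor_sub (component_span H \<zeta>)"
    using fin_elem_component_span[OF H] cop_component_span_mem_tensor_sub[OF H \<zeta>] by blast+
next
  show "(\<lambda>_. 0) \<in> component_span H \<zeta>"
    using component_spanI[of "\<lambda>_. 0" H \<zeta>] by simp
next
  fix x y assume "x \<in> component_span H \<zeta>" "y \<in> component_span H \<zeta>"
  obtain a where a: "finite {n. a n \<noteq> 0}" "x = (\<lambda>b. a (hdeg H b) * \<zeta> b)"
    using \<open>x \<in> component_span H \<zeta>\<close> by (rule component_spanE)
  obtain a' where a': "finite {n. a' n \<noteq> 0}" "y = (\<lambda>b. a' (hdeg H b) * \<zeta> b)"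
    using \<open>y \<in> component_span H \<zeta>\<close> by (rule component_spanE)
  have "finite {n. a n + a' n \<noteq> 0}"
    by (rule finite_subset[of _ "{n. a n \<noteq> 0} \<union> {n. a' n \<noteq> 0}"]) (use a a' in auto)
  then show "(\<lambda>b. x b + y b) \<in> component_span H \<zeta>"
    using component_spanI[of "\<lambda>n. a n + a' n" H \<zeta>] by (simp add: a a' distrib_right)
next
  fix x c assume "x \<in> component_span H \<zeta>"
  then obtain a where a: "finite {n. a n \<noteq> 0}" "x = (\<lambda>b. a (hdeg H b) * \<zeta> b)"
    by (rule component_spanE)
  have "finite {n. c * a n \<noteq> 0}"
    by (rule finite_subset[OF _ a(1)]) auto
  then show "(\<lambda>b. c * x b) \<in> component_span H \<zeta>"
    using component_spanI[of "\<lambda>n. c * a n" H \<zeta>] by (simp add: a mult.assoc)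
next
  fix x n assume "x \<in> component_span H \<zeta>"
  then obtain a where "x = (\<lambda>b. a (hdeg H b) * \<zeta> b)"
    by (rule component_spanE)
  then have "proj (hdual H) n x = (\<lambda>b. a n * hcomp H \<zeta> n b)"
    by (auto simp: proj_def hcomp_def)
  then show "proj (hdual H) n x \<in> component_span H \<zeta>"
    by (simp add: scaled_hcomp_mem_component_span)
qed

lemma lin_bar_hdual_hcomp:
  assumes "is_hopf H"
  shows "lin (bar (hdual H) \<theta>) (hcomp H \<zeta> n) = lin \<theta> (hcomp H (bar H \<zeta>) n)"
  by (simp add: lin_hcomp[OF assms] bar_def mult_ac)

lemma lin_char_inv_hdual_hcomp:
  assumes "is_hopf H"
  shows "lin (char_inv (hdual H) \<theta>) (hcomp H \<zeta> n) = lin \<theta> (hcomp H (char_inv H \<zeta>) n)"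
proof -
  have "lin (char_inv (hdual H) \<theta>) (hcomp H \<zeta> n) =
        (\<Sum>b\<in>Deg H n. \<Sum>c\<in>Deg H n. \<zeta> b * hantip H c b * \<theta> c)"
    by (auto simp: lin_hcomp[OF assms] char_inv_def Deg_def sum_distrib_left mult.assoc
             intro!: sum.cong)
  also have "\<dots> = (\<Sum>c\<in>Deg H n. (\<Sum>b\<in>Deg H n. hantip H c b * \<zeta> b) * \<theta> c)"
    by (subst sum.swap) (simp add: sum_distrib_left sum_distrib_right mult_ac)
  also have "\<dots> = lin \<theta> (hcomp H (char_inv H \<zeta>) n)"
    by (auto simp: lin_hcomp[OF assms] char_inv_def Deg_def intro!: sum.cong)
  finally show ?thesis .
qed

theorem proposition5p9:
  fixes H :: "('b, 'k::field) hopf_data" and \<zeta> \<eta> :: "'b \<Rightarrow> 'k"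
  assumes "is_hopf H"
    and "is_character H \<zeta>"
    and "is_character (hdual H) \<eta>"
  shows "(even_char H \<zeta> \<longrightarrow> (\<forall>n. hcomp H \<zeta> n \<in> S_plus (hdual H) \<eta>)) \<and>
         (odd_char H \<zeta> \<longrightarrow> (\<forall>n. hcomp H \<zeta> n \<in> S_minus (hdual H) \<eta>))"
proof (intro conjI impI allI)
  fix n
  have sub: "graded_subcoalgebra (hdual H) (component_span H \<zeta>)"
    using component_span_graded_subcoalgebra[OF assms(1,2)] .
  show "hcomp H \<zeta> n \<in> S_plus (hdual H) \<eta>" if "even_char H \<zeta>"
  proof -
    have "lin (bar (hdual H) \<eta>) (hcomp H \<zeta> m) = lin \<eta> (hcomp H \<zeta> m)" for m
      using lin_bar_hdual_hcomp[OF assms(1)] that by (simp add: even_char_def)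
    then have "lin (bar (hdual H) \<eta>) x = lin \<eta> x" if "x \<in> component_span H \<zeta>" for x
      using lin_component_span_eq[OF assms(1) _ that] by blast
    then show ?thesis
      unfolding S_plus_def using sub hcomp_mem_component_span by blast
  qed
  show "hcomp H \<zeta> n \<in> S_minus (hdual H) \<eta>" if "odd_char H \<zeta>"
  proof -
    have "lin (bar (hdual H) \<eta>) (hcomp H \<zeta> m) = lin (char_inv (hdual H) \<eta>) (hcomp H \<zeta> m)" for m
      using lin_bar_hdual_hcomp[OF assms(1)] lin_char_inv_hdual_hcomp[OF assms(1)] that
      by (simp add: odd_char_def)
    then have "lin (bar (hdual H) \<eta>) x = lin (char_inv (hdual H) \<eta>) x"
      if "x \<in> component_span H \<zeta>" for x
      using lin_component_span_eq[OF assms(1) _ that] by blast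
    then show ?thesis
      unfolding S_minus_def using sub hcomp_mem_component_span by blast
  qed
qed

end
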